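(* Let $f \in \mathbb{Z}[x]$ be a tower-stable polynomial, let $a$ be a positive integer, let $p$ be a prime number and $k$ a positive integer. Put $\kappa = \kappa_{f,a}$, $\lambda = \lambda_{f,a}$ and $$\mu_p = \prod_{i=0}^{\lambda(p)-1} f'\big(f^{\kappa(p)+i}(a)\big).$$ (i) If $\mu_p \equiv 0 \pmod p$, then $\lambda(p^k) = \lambda(p)$ and $\kappa(p^k) \le \kappa(p) + (k-1)\lambda(p)$. (ii) If $\mu_p \not\equiv 0 \pmod p$, then $\kappa(p^k) = \kappa(p)$ and $\lambda(p^k)$ divides $\lambda(p)\cdot(p-1)\cdot p^{k-1}$.
   Context: $f^j$ is the $j$-th iterate of $f$ and $f'$ its derivative. For a positive integer $n$, $f_n:\mathbb{Z}/n\mathbb{Z}\to\mathbb{Z}/n\mathbb{Z}$ is the reduction of $f$. $\kappa_{f,a}(n)$ (tail length) and $\lambda_{f,a}(n)$ (cycle length) are the unique integers $\kappa\ge0$, $\lambda\ge1$ such that for all $k'\ge0$, $l'\ge1$: $f_n^{k'}(\bar a) = f_n^{k'+l'}(\bar a)$ iff $\kappa\le k'$ and $\lambda\mid l'$, where $\bar a = a \bmod n$. $f$ is tower-stable if for every prime $q$, $f_q$ is not a cyclic permutation of $\mathbb{Z}/q\mathbb{Z}$ of length $q$. *)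

theory Defs
  imports "HOL-Computational_Algebra.Polynomial"
begin

text \<open>Reduction f_n of f modulo n, acting on representatives 0..n-1 of Z/nZ.\<close>
definition red :: "int poly \<Rightarrow> nat \<Rightarrow> int \<Rightarrow> int" where
  "red f n x = poly f x mod int n"

definition is_tail_cycle :: "int poly \<Rightarrow> int \<Rightarrow> nat \<Rightarrow> nat \<Rightarrow> nat \<Rightarrow> bool" where
  "is_tail_cycle f a n kap lam \<longleftrightarrow> lam \<ge> 1 \<and>
     (\<forall>k' l'. l' \<ge> 1 \<longrightarrow>
        (((red f n) ^^ k') (a mod int n) = ((red f n) ^^ (k' + l')) (a mod int n)
          \<longleftrightarrow> kap \<le> k' \<and> lam dvd l'))"

definition kappa :: "int poly \<Rightarrow> int \<Rightarrow> nat \<Rightarrow> nat" where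
  "kappa f a n = fst (THE p. is_tail_cycle f a n (fst p) (snd p))"

definition lambda :: "int poly \<Rightarrow> int \<Rightarrow> nat \<Rightarrow> nat" where
  "lambda f a n = snd (THE p. is_tail_cycle f a n (fst p) (snd p))"

definition full_cycle :: "(int \<Rightarrow> int) \<Rightarrow> nat \<Rightarrow> bool" where
  "full_cycle g q \<longleftrightarrow> bij_betw g {0..<int q} {0..<int q} \<and>
     (\<forall>x\<in>{0..<int q}. \<forall>y\<in>{0..<int q}. \<exists>j. (g ^^ j) x = y)"

definition tower_stable :: "int poly \<Rightarrow> bool" where
  "tower_stable f \<longleftrightarrow> (\<forall>q::nat. prime q \<longrightarrow> \<not> full_cycle (red f q) q)"

end

theory Submission
  imports Defs "HOL-Number_Theory.Number_Theory"
begin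

text \<open>
  Let \<open>y = f^\<kappa>(a)\<close> be the first point of the cycle modulo \<open>p\<close>. By the chain rule
  \<open>\<mu>\<^sub>p = (f^\<lambda>)'(y)\<close>, and over \<open>\<int>\<close> every iterate has a first-order Taylor expansion:
  if \<open>d | q | u - v\<close> then \<open>f^N(u) \<equiv> f^N(v) + (u - v) (f^N)'(v)\<close> modulo \<open>q d\<close>.
  If \<open>p | \<mu>\<^sub>p\<close>, the differences of consecutive returns \<open>f^(m \<lambda>)(y)\<close> therefore gain a factor
  \<open>p\<close> with every turn, so modulo \<open>p^k\<close> the orbit is \<open>\<lambda>\<close>-periodic from \<open>\<kappa> + (k - 1) \<lambda>\<close> on.
  If \<open>p\<close> does not divide \<open>\<mu>\<^sub>p\<close>, Fermat gives \<open>(f^L)'(y) \<equiv> 1\<close> modulo \<open>p\<close> for \<open>L = \<lambda> (p - 1)\<close>,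
  so once \<open>q | f^L(y) - y\<close> the returns satisfy \<open>f^(i L)(y) - y \<equiv> i (f^L(y) - y)\<close> modulo \<open>p q\<close>;
  taking \<open>i = p\<close> gains a factor \<open>p\<close>, and \<open>y\<close> is periodic modulo \<open>p^k\<close> with period
  \<open>\<lambda> (p - 1) p^(k - 1)\<close>. Reduction modulo \<open>p\<close> supplies \<open>\<kappa>(p) \<le> \<kappa>(p^k)\<close> and \<open>\<lambda>(p) | \<lambda>(p^k)\<close>.
\<close>

lemma funpow_add_apply: "(g ^^ (m + n)) x = (g ^^ n) ((g ^^ m) x)"
  unfolding add.commute[of m n] funpow_add by simp

lemma funpow_mult_Suc_apply: "(g ^^ L) ((g ^^ (L * j)) x) = (g ^^ (L * Suc j)) x"
proof -
  have "L * Suc j = L * j + L"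
    by simp
  then show ?thesis
    by (simp only: funpow_add_apply)
qed

lemma funpow_eq_shift:
  fixes g :: "'a \<Rightarrow> 'a"
  assumes "(g ^^ i) x = (g ^^ j) x"
  shows "(g ^^ (i + t)) x = (g ^^ (j + t)) x"
  using assms by (simp only: funpow_add_apply)

lemma funpow_eq_shift_multiple:
  fixes g :: "'a \<Rightarrow> 'a"
  assumes "(g ^^ k) x = (g ^^ (k + l)) x"
  shows "(g ^^ (k + t + l * m)) x = (g ^^ (k + t)) x"
proof (induction m)
  case (Suc m)
  have "(g ^^ (k + t + l * Suc m)) x = (g ^^ (k + l + (t + l * m))) x"
    by (simp add: ac_simps)
  also have "\<dots> = (g ^^ (k + (t + l * m))) x"
    using funpow_eq_shift[OF assms[symmetric]] by blast
  finally show ?case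
    using Suc by (simp add: ac_simps)
qed simp

lemma funpow_period_from_cycle_start:
  fixes g :: "'a \<Rightarrow> 'a"
  assumes cycle: "(g ^^ kap) x = (g ^^ (kap + lam)) x" and "lam \<ge> 1"
    and "kap \<le> k" and "(g ^^ (k + r)) x = (g ^^ k) x"
  shows "(g ^^ (kap + r)) x = (g ^^ kap) x"
proof -
  obtain t where t: "k = kap + t"
    using assms(3) le_Suc_ex by blast
  have "t \<le> lam * k"
    using t assms(2) by (metis le_add2 le_trans mult_le_mono1 mult_1)
  \<comment> \<open>move on to \<open>kap + lam * k\<close>, a whole number of turns past \<open>kap\<close>\<close>
  have "(g ^^ (k + r + (lam * k - t))) x = (g ^^ (k + (lam * k - t))) x"
    using assms(4) by (rule funpow_eq_shift)
  then have "(g ^^ (kap + r + lam * k)) x = (g ^^ (kap + 0 + lam * k)) x"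
    using t \<open>t \<le> lam * k\<close> by (simp add: ac_simps)
  then show ?thesis
    using funpow_eq_shift_multiple[OF cycle, where t=r and m=k]
      funpow_eq_shift_multiple[OF cycle, where t=0 and m=k] by simp
qed

lemma funpow_tail_cycle_exists:
  fixes g :: "'a \<Rightarrow> 'a"
  assumes "finite (range (\<lambda>j. (g ^^ j) x))"
  shows "\<exists>kap lam. lam \<ge> 1 \<and> (\<forall>k l. l \<ge> 1 \<longrightarrow>
           ((g ^^ k) x = (g ^^ (k + l)) x \<longleftrightarrow> kap \<le> k \<and> lam dvd l))"
proof -
  define s where "s j = (g ^^ j) x" for j
  have "\<not> inj s"
    using assms infinite_UNIV_nat finite_imageD unfolding s_def by blast
  then obtain i j where "i < j" "s i = s j"
    unfolding inj_def by (metis linorder_neqE_nat)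
  then have "\<exists>k l. l \<ge> 1 \<and> s k = s (k + l)"
    by (intro exI[of _ i] exI[of _ "j - i"]) auto
  define kap where "kap = (LEAST k. \<exists>l. l \<ge> 1 \<and> s k = s (k + l))"
  have "\<exists>l. l \<ge> 1 \<and> s kap = s (kap + l)"
    unfolding kap_def by (rule LeastI_ex) fact
  define lam where "lam = (LEAST l. l \<ge> 1 \<and> s kap = s (kap + l))"
  have lam: "lam \<ge> 1" "s kap = s (kap + lam)"
    using LeastI_ex[OF \<open>\<exists>l. l \<ge> 1 \<and> s kap = s (kap + l)\<close>] unfolding lam_def by auto
  have periodic: "s (kap + t + lam * m) = s (kap + t)" for t m
    using funpow_eq_shift_multiple[where g=g and k=kap and l=lam] lam(2) unfolding s_def by blast
  have "s k = s (k + l) \<longleftrightarrow> kap \<le> k \<and> lam dvd l" if "l \<ge> 1" for k l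
  proof
    assume "kap \<le> k \<and> lam dvd l"
    then obtain t m where "k = kap + t" "l = lam * m"
      using le_Suc_ex by blast
    then show "s k = s (k + l)"
      using periodic[where t=t and m=m] by simp
  next
    assume loop: "s k = s (k + l)"
    then have "kap \<le> k"
      unfolding kap_def using that by (intro Least_le) blast
    then obtain t where t: "k = kap + t"
      using le_Suc_ex by blast
    have "s (k + l mod lam) = s (k + l mod lam + lam * (l div lam))"
      using periodic[where t="t + l mod lam" and m="l div lam"] t by (simp add: ac_simps)
    also have "\<dots> = s k"
      using loop by (simp add: ac_simps)
    finally have "s (k + l mod lam) = s k" .
    then have "s (kap + l mod lam) = s kap"
      using funpow_period_from_cycle_start[OF lam(2)[unfolded s_def] lam(1) \<open>kap \<le> k\<close>]
      unfolding s_def by blast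
    have "l mod lam = 0"
    proof (rule ccontr)
      assume "l mod lam \<noteq> 0"
      then have "lam \<le> l mod lam"
        using \<open>s (kap + l mod lam) = s kap\<close> unfolding lam_def by (intro Least_le) simp
      then show False
        using mod_less_divisor[of lam l] lam(1) by linarith
    qed
    then show "kap \<le> k \<and> lam dvd l"
      using \<open>kap \<le> k\<close> by auto
  qed
  then show ?thesis
    using lam(1) unfolding s_def by blast
qed

lemma power2_dvd_poly_diff_linear:
  fixes p :: "'a :: idom poly"
  shows "(x - y)\<^sup>2 dvd poly p x - poly p y - (x - y) * poly (pderiv p) y"
proof (induction p)
  case (pCons c q)
  have "poly (pCons c q) x - poly (pCons c q) y - (x - y) * poly (pderiv (pCons c q)) y
      = x * (poly q x - poly q y - (x - y) * poly (pderiv q) y) + (x - y)\<^sup>2 * poly (pderiv q) y"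
    by (simp add: pderiv_pCons algebra_simps power2_eq_square)
  then show ?case
    using pCons.IH by (simp add: dvd_add)
qed simp

lemma poly_cong:
  fixes f :: "int poly"
  assumes "[x = y] (mod m)"
  shows "[poly f x = poly f y] (mod m)"
proof -
  have "x - y dvd poly f x - poly f y - (x - y) * poly (pderiv f) y"
    using power2_dvd_poly_diff_linear[of x y f] by (rule dvd_trans[rotated]) (simp add: power2_eq_square)
  then have "x - y dvd poly f x - poly f y"
    by (metis diff_add_cancel dvd_add dvd_triv_left)
  then show ?thesis
    using assms by (meson cong_iff_dvd_diff dvd_trans)
qed

lemma funpow_poly_cong:
  fixes f :: "int poly"
  assumes "[x = y] (mod m)"
  shows "[(poly f ^^ N) x = (poly f ^^ N) y] (mod m)"
  using assms by (induction N) (simp_all add: poly_cong)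

lemma red_funpow: "(red f n ^^ j) (a mod int n) = (poly f ^^ j) a mod int n"
proof (induction j)
  case (Suc j)
  have "poly f ((poly f ^^ j) a mod int n) mod int n = poly f ((poly f ^^ j) a) mod int n"
    using poly_cong[of "(poly f ^^ j) a mod int n" "(poly f ^^ j) a" "int n" f]
    by (simp add: cong_def)
  then show ?case
    using Suc by (simp add: red_def)
qed simp

lemma is_tail_cycle_unique:
  assumes "is_tail_cycle f a n kap lam" and "is_tail_cycle f a n kap' lam'"
  shows "kap = kap' \<and> lam = lam'"
proof -
  have "kap' \<le> kap \<and> lam' dvd lam" "kap \<le> kap' \<and> lam dvd lam'"
    using assms unfolding is_tail_cycle_def by (meson dvd_refl order_refl)+
  then show ?thesis
    by (simp add: dvd_antisym)
qed

lemma is_tail_cycle_kappa_lambda: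
  assumes "n > 0"
  shows "is_tail_cycle f a n (kappa f a n) (lambda f a n)"
proof -
  have "range (\<lambda>j. (red f n ^^ j) (a mod int n)) \<subseteq> {0..<int n}"
    using assms by (auto simp: red_funpow)
  then have "finite (range (\<lambda>j. (red f n ^^ j) (a mod int n)))"
    using finite_subset by blast
  then obtain kap lam where "is_tail_cycle f a n kap lam"
    unfolding is_tail_cycle_def by (blast dest: funpow_tail_cycle_exists)
  then have "\<exists>!c. is_tail_cycle f a n (fst c) (snd c)"
    using is_tail_cycle_unique by (intro ex1I[of _ "(kap, lam)"]) (auto simp: prod_eq_iff)
  then show ?thesis
    unfolding kappa_def lambda_def by (rule theI')
qed

lemma lambda_pos:
  assumes "n > 0"
  shows "lambda f a n > 0"
proof -
  have "lambda f a n \<ge> 1"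
    using is_tail_cycle_kappa_lambda[OF assms] unfolding is_tail_cycle_def by blast
  then show ?thesis
    by simp
qed

lemma orbit_cong_iff_kappa_lambda:
  assumes "n > 0" and "l > 0"
  shows "[(poly f ^^ (k + l)) a = (poly f ^^ k) a] (mod int n)
           \<longleftrightarrow> kappa f a n \<le> k \<and> lambda f a n dvd l"
proof -
  have "(red f n ^^ k) (a mod int n) = (red f n ^^ (k + l)) (a mod int n)
          \<longleftrightarrow> kappa f a n \<le> k \<and> lambda f a n dvd l"
    using is_tail_cycle_kappa_lambda[OF assms(1)] assms(2) unfolding is_tail_cycle_def by simp
  then show ?thesis
    unfolding red_funpow cong_def by (simp add: eq_commute)
qed

lemma cycle_start_cong:
  assumes "n > 0"
  shows "[(poly f ^^ lambda f a n) ((poly f ^^ kappa f a n) a) = (poly f ^^ kappa f a n) a] (mod int n)"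
  using orbit_cong_iff_kappa_lambda[OF assms lambda_pos[OF assms]]
  by (simp add: funpow_add_apply)

lemma kappa_lambda_mono_dvd:
  assumes "n > 0" and "m dvd n"
  shows "kappa f a m \<le> kappa f a n \<and> lambda f a m dvd lambda f a n"
proof -
  have "m > 0"
    using assms by (rule dvd_pos_nat)
  have "[(poly f ^^ (kappa f a n + lambda f a n)) a = (poly f ^^ kappa f a n) a] (mod int n)"
    using orbit_cong_iff_kappa_lambda[OF assms(1) lambda_pos[OF assms(1)]] by simp
  then have "[(poly f ^^ (kappa f a n + lambda f a n)) a = (poly f ^^ kappa f a n) a] (mod int m)"
    using assms(2) by (auto intro: cong_dvd_modulus)
  then show ?thesis
    using orbit_cong_iff_kappa_lambda[OF \<open>m > 0\<close> lambda_pos[OF assms(1)]] by simp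
qed

lemma funpow_poly_cycle_mult:
  fixes f :: "int poly"
  assumes "[(poly f ^^ L) y = y] (mod m)"
  shows "[(poly f ^^ (L * N)) y = y] (mod m)"
proof (induction N)
  case (Suc N)
  have "(poly f ^^ (L * Suc N)) y = (poly f ^^ L) ((poly f ^^ (L * N)) y)"
    by (rule funpow_mult_Suc_apply[symmetric])
  also have "[\<dots> = (poly f ^^ L) y] (mod m)"
    using Suc by (rule funpow_poly_cong)
  finally show ?case
    using assms by (rule cong_trans)
qed simp

text \<open>By the chain rule, \<open>iter_deriv f N v\<close> is the derivative of \<open>f\<^sup>N\<close> at \<open>v\<close>.\<close>
definition iter_deriv :: "int poly \<Rightarrow> nat \<Rightarrow> int \<Rightarrow> int" where
  "iter_deriv f N v = (\<Prod>i<N. poly (pderiv f) ((poly f ^^ i) v))"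

lemma iter_deriv_add:
  "iter_deriv f (M + N) v = iter_deriv f M v * iter_deriv f N ((poly f ^^ M) v)"
  by (induction N) (simp_all add: iter_deriv_def funpow_add_apply)

lemma iter_deriv_cong:
  assumes "[v = w] (mod m)"
  shows "[iter_deriv f N v = iter_deriv f N w] (mod m)"
  unfolding iter_deriv_def using assms by (intro cong_prod poly_cong funpow_poly_cong)

lemma iter_deriv_cycle_power:
  assumes "[(poly f ^^ L) y = y] (mod m)"
  shows "[iter_deriv f (L * N) y = iter_deriv f L y ^ N] (mod m)"
proof (induction N)
  case (Suc N)
  have "iter_deriv f (L * Suc N) y = iter_deriv f (L * N) y * iter_deriv f L ((poly f ^^ (L * N)) y)"
    using iter_deriv_add[of f "L * N" L y] by (simp add: ac_simps)
  also have "[\<dots> = iter_deriv f L y ^ N * iter_deriv f L y] (mod m)"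
    using Suc funpow_poly_cycle_mult[OF assms] by (intro cong_mult iter_deriv_cong)
  finally show ?case
    by (simp add: ac_simps)
qed (simp add: iter_deriv_def)

lemma funpow_poly_linearization:
  fixes f :: "int poly" and d q u v :: int
  assumes "d dvd q" and "q dvd u - v"
  shows "q * d dvd (poly f ^^ N) u - (poly f ^^ N) v - (u - v) * iter_deriv f N v"
proof (induction N)
  case (Suc N)
  define U V D where "U = (poly f ^^ N) u" and "V = (poly f ^^ N) v" and "D = iter_deriv f N v"
  have IH: "q * d dvd U - V - (u - v) * D"
    using Suc.IH unfolding U_def V_def D_def .
  then have "q dvd (U - V - (u - v) * D) + (u - v) * D"
    using assms(2) by (intro dvd_add dvd_mult2) (auto intro: dvd_mult_left)
  then have "q dvd U - V"
    by simp
  then have "q * d dvd (U - V) * (U - V)"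
    using assms(1) by (intro mult_dvd_mono) (auto intro: dvd_trans)
  then have "q * d dvd (U - V)\<^sup>2"
    by (simp add: power2_eq_square)
  then have taylor: "q * d dvd poly f U - poly f V - (U - V) * poly (pderiv f) V"
    using power2_dvd_poly_diff_linear dvd_trans by blast
  have "q * d dvd (poly f U - poly f V - (U - V) * poly (pderiv f) V)
                  + (U - V - (u - v) * D) * poly (pderiv f) V"
    using taylor IH by (intro dvd_add dvd_mult2)
  also have "\<dots> = poly f U - poly f V - (u - v) * (D * poly (pderiv f) V)"
    by (simp add: algebra_simps)
  also have "\<dots> = (poly f ^^ Suc N) u - (poly f ^^ Suc N) v - (u - v) * iter_deriv f (Suc N) v"
    by (simp add: iter_deriv_def U_def V_def D_def)
  finally show ?case .
qed (simp add: iter_deriv_def)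

lemma funpow_returns_cong_power_if_dvd_iter_deriv:
  fixes f :: "int poly" and n :: int
  assumes cycle: "[(poly f ^^ L) y = y] (mod n)" and "n dvd iter_deriv f L y"
  shows "[(poly f ^^ (L * Suc m)) y = (poly f ^^ (L * m)) y] (mod n ^ Suc m)"
proof (induction m)
  case 0
  show ?case
    using cycle by simp
next
  case (Suc m)
  define u v where "u = (poly f ^^ (L * Suc m)) y" and "v = (poly f ^^ (L * m)) y"
  have "[iter_deriv f L v = iter_deriv f L y] (mod n)"
    unfolding v_def using cycle by (intro iter_deriv_cong funpow_poly_cycle_mult)
  then have deriv: "n dvd iter_deriv f L v"
    using assms(2) cong_dvd_iff by blast
  have diff: "n ^ Suc m dvd u - v"
    using Suc unfolding u_def v_def by (simp add: cong_iff_dvd_diff)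
  have "n ^ Suc (Suc m) dvd ((poly f ^^ L) u - (poly f ^^ L) v - (u - v) * iter_deriv f L v)
                            + (u - v) * iter_deriv f L v"
    unfolding power_Suc2[of n "Suc m"] using funpow_poly_linearization[OF _ diff] diff deriv
    by (intro dvd_add mult_dvd_mono) simp_all
  then show ?case
    unfolding u_def v_def funpow_mult_Suc_apply by (simp add: cong_iff_dvd_diff)
qed

lemma funpow_period_lift:
  fixes f :: "int poly" and q :: int and d :: nat
  assumes "int d dvd q"
    and cycle: "[(poly f ^^ L) y = y] (mod q)"
    and deriv: "[iter_deriv f L y = 1] (mod int d)"
  shows "[(poly f ^^ (L * d)) y = y] (mod q * int d)"
proof -
  define D where "D = iter_deriv f L y"
  define c where "c = (poly f ^^ L) y - y"
  have "q dvd c"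
    using cycle unfolding c_def by (simp add: cong_iff_dvd_diff)
  have "q * d dvd (poly f ^^ (L * i)) y - y - int i * c" for i
  proof (induction i)
    case (Suc i)
    define z where "z = (poly f ^^ (L * i)) y"
    have IH: "q * d dvd z - y - int i * c"
      using Suc unfolding z_def .
    have "q dvd z - y"
      using IH \<open>q dvd c\<close> dvd_mult_left by (metis diff_add_cancel dvd_add dvd_mult)
    have "q * d dvd (poly f ^^ L) z - (poly f ^^ L) y - (z - y) * D"
      unfolding D_def using assms(1) \<open>q dvd z - y\<close> by (rule funpow_poly_linearization)
    moreover have "q * d dvd (z - y) * (D - 1)"
      using \<open>q dvd z - y\<close> deriv unfolding D_def by (simp add: cong_iff_dvd_diff mult_dvd_mono)
    ultimately have "q * d dvd ((poly f ^^ L) z - (poly f ^^ L) y - (z - y) * D)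
                              + (z - y) * (D - 1) + (z - y - int i * c)"
      using IH by (intro dvd_add)
    moreover have "(poly f ^^ L) z = (poly f ^^ (L * Suc i)) y"
      unfolding z_def by (rule funpow_mult_Suc_apply)
    ultimately show ?case
      by (simp add: c_def algebra_simps)
  qed simp
  from this[of d] have "q * d dvd (poly f ^^ (L * d)) y - y - int d * c" .
  moreover have "q * d dvd int d * c"
    using \<open>q dvd c\<close> by (simp add: mult.commute mult_dvd_mono)
  ultimately show ?thesis
    by (metis cong_iff_dvd_diff diff_add_cancel dvd_add)
qed

lemma funpow_period_lift_power:
  fixes f :: "int poly" and n :: nat
  assumes cycle: "[(poly f ^^ L) y = y] (mod int n)"
    and deriv: "[iter_deriv f L y = 1] (mod int n)"
  shows "[(poly f ^^ (L * n ^ m)) y = y] (mod int n ^ Suc m)"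
proof (induction m)
  case (Suc m)
  have "[iter_deriv f (L * n ^ m) y = iter_deriv f L y ^ n ^ m] (mod int n)"
    using cycle by (rule iter_deriv_cycle_power)
  also have "[iter_deriv f L y ^ n ^ m = 1] (mod int n)"
    using cong_pow[OF deriv] by simp
  finally have "[(poly f ^^ (L * n ^ m * n)) y = y] (mod int n ^ Suc m * int n)"
    using Suc by (intro funpow_period_lift) simp_all
  then show ?case
    by (simp add: ac_simps)
qed (use cycle in simp)

text \<open>The paper's \<open>\<mu>\<^sub>n\<close>, i.e. \<open>(f\<^sup>\<lambda>)'\<close> at the first point of the cycle modulo \<open>n\<close>.\<close>
definition cycle_multiplier :: "int poly \<Rightarrow> int \<Rightarrow> nat \<Rightarrow> int" where
  "cycle_multiplier f a n = iter_deriv f (lambda f a n) ((poly f ^^ kappa f a n) a)"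

lemma kappa_lambda_power_if_dvd_cycle_multiplier:
  assumes "n > 0" and "k \<ge> 1" and "int n dvd cycle_multiplier f a n"
  shows "lambda f a (n ^ k) = lambda f a n
           \<and> kappa f a (n ^ k) \<le> kappa f a n + (k - 1) * lambda f a n"
proof -
  define kap lam where "kap = kappa f a n" and "lam = lambda f a n"
  obtain j where k: "k = Suc j"
    using assms(2) by (cases k) auto
  have "[(poly f ^^ (lam * Suc j)) ((poly f ^^ kap) a) = (poly f ^^ (lam * j)) ((poly f ^^ kap) a)]
          (mod int n ^ Suc j)"
    using cycle_start_cong[OF assms(1)] assms(3) unfolding kap_def lam_def cycle_multiplier_def
    by (rule funpow_returns_cong_power_if_dvd_iter_deriv)
  then have "[(poly f ^^ (kap + lam * j + lam)) a = (poly f ^^ (kap + lam * j)) a] (mod int (n ^ k))"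
    unfolding k by (simp flip: funpow_add_apply add: ac_simps)
  then have "kappa f a (n ^ k) \<le> kap + lam * j \<and> lambda f a (n ^ k) dvd lam"
    using assms(1) lambda_pos[OF assms(1)] unfolding lam_def
    by (subst (asm) orbit_cong_iff_kappa_lambda) simp_all
  moreover have "lam dvd lambda f a (n ^ k)"
    using kappa_lambda_mono_dvd[of "n ^ k" n] assms(1,2) unfolding lam_def by simp
  ultimately show ?thesis
    unfolding kap_def lam_def k by (simp add: dvd_antisym ac_simps)
qed

lemma kappa_lambda_power_if_cycle_multiplier_root_of_unity:
  assumes "n > 0" and "k \<ge> 1" and "e > 0" and "[cycle_multiplier f a n ^ e = 1] (mod int n)"
  shows "kappa f a (n ^ k) = kappa f a n
           \<and> lambda f a (n ^ k) dvd lambda f a n * e * n ^ (k - 1)"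
proof -
  define kap lam y where "kap = kappa f a n" and "lam = lambda f a n" and "y = (poly f ^^ kap) a"
  have cycle: "[(poly f ^^ lam) y = y] (mod int n)"
    unfolding lam_def y_def kap_def using assms(1) by (rule cycle_start_cong)
  then have "[(poly f ^^ (lam * e)) y = y] (mod int n)"
    by (rule funpow_poly_cycle_mult)
  moreover have "[iter_deriv f (lam * e) y = 1] (mod int n)"
    using iter_deriv_cycle_power[OF cycle, of e] assms(4)
    unfolding cycle_multiplier_def y_def kap_def lam_def by (rule cong_trans)
  ultimately have "[(poly f ^^ (lam * e * n ^ (k - 1))) y = y] (mod int n ^ Suc (k - 1))"
    by (rule funpow_period_lift_power)
  then have "[(poly f ^^ (kap + lam * e * n ^ (k - 1))) a = (poly f ^^ kap) a] (mod int (n ^ k))"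
    using assms(2) unfolding y_def by (simp add: funpow_add_apply)
  then have "kappa f a (n ^ k) \<le> kap \<and> lambda f a (n ^ k) dvd lam * e * n ^ (k - 1)"
    using assms(1,3) lambda_pos[OF assms(1)] unfolding lam_def
    by (subst (asm) orbit_cong_iff_kappa_lambda) simp_all
  moreover have "kap \<le> kappa f a (n ^ k)"
    using kappa_lambda_mono_dvd[of "n ^ k" n] assms(1,2) unfolding kap_def by simp
  ultimately show ?thesis
    unfolding kap_def lam_def by simp
qed

lemma fermat_theorem_int:
  assumes "prime p" and "\<not> int p dvd b"
  shows "[b ^ (p - 1) = 1] (mod int p)"
proof -
  define c where "c = nat (b mod int p)"
  have bc: "[b = int c] (mod int p)"
    using prime_gt_0_nat[OF assms(1)] unfolding c_def by (simp add: cong_def)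
  then have "\<not> p dvd c"
    using assms(2) by (metis cong_dvd_iff int_dvd_int_iff)
  with assms(1) have "[c ^ (p - 1) = 1] (mod p)"
    by (rule fermat_theorem)
  then have "[int c ^ (p - 1) = 1] (mod int p)"
    by (metis cong_int_iff of_nat_1 of_nat_power)
  then show ?thesis
    using cong_pow[OF bc] cong_trans by blast
qed

theorem theorem4p3:
  fixes f :: "int poly" and a :: int and p k :: nat
  assumes "tower_stable f" and "a > 0" and "prime p" and "k \<ge> 1"
  defines "\<mu> \<equiv> (\<Prod>i<lambda f a p. poly (pderiv f) ((poly f ^^ (kappa f a p + i)) a))"
  shows "(\<mu> mod int p = 0 \<longrightarrow>
            lambda f a (p ^ k) = lambda f a p \<and>
            kappa f a (p ^ k) \<le> kappa f a p + (k - 1) * lambda f a p)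
       \<and> (\<not> \<mu> mod int p = 0 \<longrightarrow>
            kappa f a (p ^ k) = kappa f a p \<and>
            lambda f a (p ^ k) dvd lambda f a p * (p - 1) * p ^ (k - 1))"
proof -
  have p: "p > 0" "p - 1 > 0"
    using prime_gt_1_nat[OF assms(3)] by simp_all
  have \<mu>: "\<mu> = cycle_multiplier f a p"
    unfolding \<mu>_def cycle_multiplier_def iter_deriv_def by (simp add: funpow_add_apply)
  show ?thesis
  proof (rule conjI; rule impI)
    assume "\<mu> mod int p = 0"
    then show "lambda f a (p ^ k) = lambda f a p \<and>
               kappa f a (p ^ k) \<le> kappa f a p + (k - 1) * lambda f a p"
      using p assms(4)
      by (intro kappa_lambda_power_if_dvd_cycle_multiplier) (simp_all add: \<mu> dvd_eq_mod_eq_0)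
  next
    assume "\<not> \<mu> mod int p = 0"
    then have "[cycle_multiplier f a p ^ (p - 1) = 1] (mod int p)"
      using assms(3) fermat_theorem_int by (simp add: \<mu> dvd_eq_mod_eq_0)
    then show "kappa f a (p ^ k) = kappa f a p \<and>
               lambda f a (p ^ k) dvd lambda f a p * (p - 1) * p ^ (k - 1)"
      using p assms(4) by (intro kappa_lambda_power_if_cycle_multiplier_root_of_unity)
  qed
qed

end
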